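(* Let $n\ge0$. Among the elements of $R$ whose binary representation has length $2n+4$, exactly one has binary representation beginning with $1000$, namely $[1000(10)^n]_2$; moreover $[1000(10)^n]_2$ is the smallest element of $R$ whose binary representation has length $2n+4$.
   Context: Stern's sequence $(a(n))_{n\ge0}$: $a(0)=0$, $a(1)=1$, $a(2n)=a(n)$, $a(2n+1)=a(n)+a(n+1)$; $s(n)=a(n+1)$. $R$ is the set of record-setters of $s$, i.e. indices $v\ge0$ with $s(i)<s(v)$ for all $i<v$. Binary representations have no leading zeros. For a binary string $x$, $[x]_2$ is the integer it represents in base 2; $x^i$ denotes $i$-fold concatenation. *)

theory Defs
  imports Main
begin

function stern :: "nat \<Rightarrow> nat" where
  "stern n = (if n = 0 then 0 else if n = 1 then 1
              else if even n then stern (n div 2)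
              else stern (n div 2) + stern (n div 2 + 1))"
  by auto
termination
  by (relation "measure id") (auto elim!: oddE)

definition s :: "nat \<Rightarrow> nat" where
  "s n = stern (n + 1)"

definition R :: "nat set" where
  "R = {v. \<forall>i<v. s i < s v}"

text \<open>Binary representation, most significant digit first, True = 1, no leading zeros;
  the representation of 0 is the single digit 0.\<close>
fun bin_aux :: "nat \<Rightarrow> bool list" where
  "bin_aux n = (if n = 0 then [] else bin_aux (n div 2) @ [odd n])"

definition bin :: "nat \<Rightarrow> bool list" where
  "bin n = (if n = 0 then [False] else bin_aux n)"

declare bin_aux.simps[simp del]

fun val2 :: "bool list \<Rightarrow> nat" where
  "val2 [] = 0"
| "val2 (b # xs) = (if b then 2 ^ length xs else 0) + val2 xs"

definition pow_str :: "'a list \<Rightarrow> nat \<Rightarrow> 'a list" where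
  "pow_str x i = concat (replicate i x)"

end

theory Submission
  imports Defs "HOL-Number_Theory.Fib"
begin

text \<open>
  For \<open>x \<le> 2^j\<close> Stern's sequence satisfies \<open>a(2^j p + x) = a(p) a(2^j - x) + a(p+1) a(x)\<close>,
  and its maximum on \<open>[0, 2^k]\<close> is the Fibonacci number \<open>F(k+1)\<close>. With \<open>t(m) = [(10)^m]_2\<close>,
  the pair \<open>(a(4^m q + t(m)), a(4^m q + t(m) + 1))\<close> arises from \<open>(a(q), a(q+1))\<close> by \<open>m\<close> steps of
  \<open>(c, d) \<mapsto> (c + d, c + 2d)\<close>; starting from \<open>(a(8), a(9)) = (1, 4)\<close> this gives
  \<open>s(w) > F(2n+4)\<close> for \<open>w = [1000(10)^n]_2 = 8\<cdot>4^n + t(n)\<close>. Below \<open>2^(2n+3)\<close> we have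
  \<open>s \<le> F(2n+4)\<close>, with equality at \<open>2 t(n+1)\<close>. On \<open>[2^(2n+3), w)\<close> the bound \<open>s \<le> F(2n+4)\<close>
  persists, by a weighted estimate for \<open>c a(4^m - y) + d a(y)\<close> that survives each step as long as
  \<open>d/c\<close> stays above the golden ratio; so \<open>w\<close> is a record-setter and nothing in
  \<open>[2^(2n+3), w)\<close> is. Finally \<open>s\<close> never exceeds \<open>s(w)\<close> on \<open>(w, 9\<cdot>4^n)\<close>.
\<close>

lemma stern_double: "stern (2 * m) = stern m"
  by (cases "m = 0") simp_all

lemma stern_double_Suc: "stern (2 * m + 1) = stern m + stern (m + 1)"
  by (cases "m = 0") simp_all

lemma stern_0 [simp]: "stern 0 = 0"
  and stern_1 [simp]: "stern 1 = 1"
  and stern_Suc_0 [simp]: "stern (Suc 0) = 1"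
  and stern_2 [simp]: "stern 2 = 1"
  and stern_3 [simp]: "stern 3 = 2"
  and stern_8 [simp]: "stern 8 = 1"
  and stern_9 [simp]: "stern 9 = 4"
  by simp_all

declare stern.simps [simp del]

text \<open>The sharper bound for even arguments carries the induction: of \<open>q\<close> and \<open>q + 1\<close> one is even.\<close>
lemma stern_le_fib_strong:
  "z \<le> 2 ^ k \<Longrightarrow> stern z \<le> fib (k + 1) \<and> (even z \<longrightarrow> stern z \<le> fib k)"
proof (induction k arbitrary: z)
  case 0
  then have "z = 0 \<or> z = 1" by auto
  then show ?case by (elim disjE) simp_all
next
  case (Suc k)
  show ?case
  proof (cases "even z")
    case True
    then obtain y where "z = 2 * y" by blast
    with Suc.prems Suc.IH[of y] fib_Suc_mono[of "k + 1"] show ?thesis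
      by (simp add: stern_double)
  next
    case False
    then obtain q where q: "z = 2 * q + 1" using oddE by blast
    with Suc.prems have "q + 1 \<le> 2 ^ k" by simp
    then have "stern q + stern (q + 1) \<le> fib (k + 1) + fib k"
      using Suc.IH[of q] Suc.IH[of "q + 1"] by (cases "even q") auto
    moreover have "stern z = stern q + stern (q + 1)"
      unfolding q by (rule stern_double_Suc)
    ultimately show ?thesis using False by simp
  qed
qed

lemma stern_le_fib: "z \<le> 2 ^ k \<Longrightarrow> stern z \<le> fib (k + 1)"
  using stern_le_fib_strong by blast

lemma stern_power2_mult_add:
  "x \<le> 2 ^ j \<Longrightarrow> stern (2 ^ j * p + x) = stern p * stern (2 ^ j - x) + stern (p + 1) * stern x"
proof (induction j arbitrary: x)
  case 0
  then have "x = 0 \<or> x = 1" by auto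
  then show ?case by (elim disjE) simp_all
next
  case (Suc j)
  show ?case
  proof (cases "even x")
    case True
    then obtain y where y: "x = 2 * y" by blast
    with Suc.prems have "y \<le> 2 ^ j" by simp
    moreover have "2 ^ Suc j * p + x = 2 * (2 ^ j * p + y)" "2 ^ Suc j - x = 2 * (2 ^ j - y)"
      using y by simp_all
    ultimately show ?thesis using Suc.IH[of y] y by (simp only: stern_double)
  next
    case False
    then obtain y where y: "x = 2 * y + 1" using oddE by blast
    with Suc.prems have y_le: "y + 1 \<le> 2 ^ j" by simp
    have "2 ^ Suc j * p + x = 2 * (2 ^ j * p + y) + 1" using y by simp
    then have lhs: "stern (2 ^ Suc j * p + x) = stern (2 ^ j * p + y) + stern (2 ^ j * p + (y + 1))"
      by (simp only: stern_double_Suc add.assoc)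
    have "2 ^ Suc j - x = 2 * (2 ^ j - (y + 1)) + 1" "2 ^ j - (y + 1) + 1 = 2 ^ j - y"
      using y y_le by simp_all
    then have rhs: "stern (2 ^ Suc j - x) = stern (2 ^ j - (y + 1)) + stern (2 ^ j - y)"
      by (simp only: stern_double_Suc)
    have "stern x = stern y + stern (y + 1)" using y by (simp only: stern_double_Suc)
    moreover note Suc.IH[of y] Suc.IH[OF y_le]
    ultimately show ?thesis
      unfolding lhs rhs using y_le by (simp add: algebra_simps)
  qed
qed

lemma stern_power4_mult_add:
  "x \<le> 4 ^ j \<Longrightarrow> stern (4 ^ j * p + x) = stern p * stern (4 ^ j - x) + stern (p + 1) * stern x"
  using stern_power2_mult_add[of x "2 * j" p] by (simp add: power_mult)

lemma stern_weighted_le_fib: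
  assumes "D \<le> C" "y \<le> 2 ^ j"
  shows "C * stern (2 ^ j - y) + D * stern y \<le> C * fib (j + 1) + D * fib j"
proof -
  obtain e where e: "C = D + e" using assms(1) le_Suc_ex by blast
  have tail: "stern (2 ^ j - y) \<le> fib (j + 1)" using stern_le_fib[of "2 ^ j - y" j] by simp
  have "stern (2 ^ j - y) + stern y = stern (2 ^ j * 1 + y)"
    using stern_power2_mult_add[OF assms(2), of 1] by (simp only: one_add_one stern_1 stern_2 mult_1)
  also have "\<dots> \<le> fib (j + 2)" using stern_le_fib[of "2 ^ j * 1 + y" "j + 1"] assms(2) by simp
  finally have sum: "stern (2 ^ j - y) + stern y \<le> fib (j + 1) + fib j" by (simp add: fib_plus_2)
  have "C * stern (2 ^ j - y) + D * stern y = D * (stern (2 ^ j - y) + stern y) + e * stern (2 ^ j - y)"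
    using e by (simp add: algebra_simps)
  also have "\<dots> \<le> D * (fib (j + 1) + fib j) + e * fib (j + 1)"
    by (rule add_mono[OF mult_le_mono2[OF sum] mult_le_mono2[OF tail]])
  also have "\<dots> = C * fib (j + 1) + D * fib j" using e by (simp add: algebra_simps)
  finally show ?thesis .
qed

definition tens :: "nat \<Rightarrow> nat" where
  "tens m = val2 (pow_str [True, False] m)"

lemma length_pow_str_10: "length (pow_str [True, False] m) = 2 * m"
  by (induction m) (simp_all add: pow_str_def)

lemma val2_append: "val2 (xs @ ys) = val2 xs * 2 ^ length ys + val2 ys"
  by (induction xs) (simp_all add: power_add algebra_simps)

lemma val2_less: "val2 xs < 2 ^ length xs"
  by (induction xs) auto

lemma tens_0 [simp]: "tens 0 = 0"
  by (simp add: tens_def pow_str_def)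

lemma tens_Suc: "tens (Suc m) = 2 * 4 ^ m + tens m"
proof -
  have "pow_str [True, False] (Suc m) = [True, False] @ pow_str [True, False] m"
    by (simp add: pow_str_def)
  then show ?thesis
    unfolding tens_def by (simp only: val2_append length_pow_str_10 power_mult) simp
qed

lemma tens_less: "tens m < 4 ^ m"
  using val2_less[of "pow_str [True, False] m"]
  unfolding tens_def by (simp only: length_pow_str_10 power_mult) simp

fun stern_step :: "nat \<times> nat \<Rightarrow> nat \<times> nat" where
  "stern_step (c, d) = (c + d, c + 2 * d)"

lemma stern_step_stern: "stern_step (stern q, stern (q + 1)) = (stern (4 * q + 2), stern (4 * q + 2 + 1))"
proof -
  have "stern (4 * q + 2) = stern (2 * (2 * q + 1))" by (rule arg_cong[where f = stern]) simp
  also have "\<dots> = stern q + stern (q + 1)" by (simp only: stern_double stern_double_Suc)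
  finally have even_part: "stern (4 * q + 2) = stern q + stern (q + 1)" .
  have "stern (4 * q + 2 + 1) = stern (2 * (2 * q + 1) + 1)" by (rule arg_cong[where f = stern]) simp
  also have "\<dots> = stern (2 * q + 1) + stern (2 * (q + 1))"
    using stern_double_Suc[of "2 * q + 1"] by (simp add: algebra_simps)
  also have "\<dots> = stern q + 2 * stern (q + 1)" by (simp only: stern_double stern_double_Suc)
  finally show ?thesis using even_part by simp
qed

lemma stern_step_funpow_Suc:
  "(stern_step ^^ Suc m) (c, d) =
     (c * fib (2 * m + 1) + d * fib (2 * m + 2), c * fib (2 * m + 2) + d * fib (2 * m + 3))"
proof (induction m)
  case 0
  then show ?case by (simp add: numeral_3_eq_3)
next
  case (Suc m)
  have "fib (2 * m + 4) = fib (2 * m + 3) + fib (2 * m + 2)"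
    "fib (2 * m + 5) = fib (2 * m + 4) + fib (2 * m + 3)"
    "fib (2 * m + 3) = fib (2 * m + 2) + fib (2 * m + 1)"
    by (simp_all add: numeral_eq_Suc)
  with Suc show ?case by (simp add: algebra_simps)
qed

lemma stern_power4_mult_add_tens:
  "(stern (4 ^ m * q + tens m), stern (4 ^ m * q + tens m + 1)) = (stern_step ^^ m) (stern q, stern (q + 1))"
proof (induction m arbitrary: q)
  case 0
  then show ?case by simp
next
  case (Suc m)
  have "4 ^ Suc m * q + tens (Suc m) = 4 ^ m * (4 * q + 2) + tens m"
    by (simp add: tens_Suc algebra_simps)
  then have "(stern (4 ^ Suc m * q + tens (Suc m)), stern (4 ^ Suc m * q + tens (Suc m) + 1))
      = (stern_step ^^ m) (stern (4 * q + 2), stern (4 * q + 2 + 1))"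
    by (simp only: Suc.IH)
  also have "\<dots> = (stern_step ^^ Suc m) (stern q, stern (q + 1))"
    by (simp only: funpow_Suc_right comp_def stern_step_stern)
  finally show ?case .
qed

lemma stern_tens: "stern (tens m) = fib (2 * m)" "stern (tens m + 1) = fib (2 * m + 1)"
proof -
  have "(stern (tens m), stern (tens m + 1)) = (fib (2 * m), fib (2 * m + 1))"
  proof (cases m)
    case (Suc k)
    then have "2 * m = 2 * k + 2" "2 * m + 1 = 2 * k + 3" by simp_all
    then show ?thesis
      using stern_power4_mult_add_tens[of m 0] \<open>m = Suc k\<close>
      by (simp only: stern_step_funpow_Suc) simp
  qed simp
  then show "stern (tens m) = fib (2 * m)" "stern (tens m + 1) = fib (2 * m + 1)" by simp_all
qed

lemma stern_4_mult_add_3: "stern (4 * p + 3) = stern p + 2 * stern (p + 1)"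
  using stern_step_stern[of p] by (simp add: numeral_3_eq_3)

lemma stern_4_mult_add_4: "stern (4 * p + 4) = stern (p + 1)"
proof -
  have "stern (4 * p + 4) = stern (2 * (2 * (p + 1)))" by (rule arg_cong[where f = stern]) simp
  then show ?thesis by (simp only: stern_double)
qed

lemma stern_power4_mult_add_tens_Suc:
  "stern (4 ^ Suc k * p + tens (Suc k) + 1) = stern p * fib (2 * k + 2) + stern (p + 1) * fib (2 * k + 3)"
  using arg_cong[OF stern_power4_mult_add_tens[of "Suc k" p], where f = snd]
  by (simp only: stern_step_funpow_Suc snd_conv)

lemma stern_after_tens_le:
  "tens m < x \<Longrightarrow> x < 4 ^ m \<Longrightarrow> stern (4 ^ m * p + x + 1) \<le> stern (4 ^ m * p + tens m + 1)"
proof (induction m arbitrary: p x)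
  case 0
  then show ?case by simp
next
  case (Suc k)
  show ?case
  proof (cases "x < 3 * 4 ^ k")
    case True
    define x' where "x' = x - 2 * 4 ^ k"
    have x: "x = 2 * 4 ^ k + x'" using Suc.prems(1) by (simp add: x'_def tens_Suc)
    have "tens k < x'" "x' < 4 ^ k" using Suc.prems(1) True by (simp_all add: x tens_Suc)
    moreover have "4 ^ Suc k * p + x = 4 ^ k * (4 * p + 2) + x'"
      "4 ^ Suc k * p + tens (Suc k) = 4 ^ k * (4 * p + 2) + tens k"
      by (simp_all add: x tens_Suc algebra_simps)
    ultimately show ?thesis using Suc.IH[of x' "4 * p + 2"] by (simp only:)
  next
    case False
    define x' where "x' = x - 3 * 4 ^ k"
    have x'_le: "x' + 1 \<le> 4 ^ k" using Suc.prems(2) False by (simp add: x'_def)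
    have "4 ^ Suc k * p + x + 1 = 4 ^ k * (4 * p + 3) + (x' + 1)" "4 * p + 3 + 1 = 4 * p + 4"
      using False by (simp_all add: x'_def algebra_simps)
    then have "stern (4 ^ Suc k * p + x + 1)
        = stern (4 * p + 3) * stern (2 ^ (2 * k) - (x' + 1)) + stern (p + 1) * stern (x' + 1)"
      using stern_power4_mult_add[OF x'_le, of "4 * p + 3"]
      by (simp only: stern_4_mult_add_4 power_mult) simp
    also have "\<dots> \<le> stern (4 * p + 3) * fib (2 * k + 1) + stern (p + 1) * fib (2 * k)"
      using x'_le by (intro stern_weighted_le_fib) (simp_all add: stern_4_mult_add_3 power_mult)
    also have "\<dots> \<le> stern p * fib (2 * k + 2) + stern (p + 1) * fib (2 * k + 3)"
    proof -
      have "fib (2 * k + 2) = fib (2 * k + 1) + fib (2 * k)"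
        "fib (2 * k + 3) = fib (2 * k + 2) + fib (2 * k + 1)"
        by (simp_all add: numeral_eq_Suc)
      then show ?thesis unfolding stern_4_mult_add_3 by (simp add: algebra_simps)
    qed
    also have "\<dots> = stern (4 ^ Suc k * p + tens (Suc k) + 1)"
      by (rule stern_power4_mult_add_tens_Suc[symmetric])
    finally show ?thesis .
  qed
qed

text \<open>\<open>golden (c, d)\<close> says \<open>d \<ge> \<phi> c\<close> for the golden ratio \<open>\<phi>\<close>.\<close>
definition golden :: "nat \<times> nat \<Rightarrow> bool" where
  "golden = (\<lambda>(c, d). c * c + c * d \<le> d * d)"

lemma golden_stern_step: "golden cd \<Longrightarrow> golden (stern_step cd)"
  by (cases cd) (simp add: golden_def algebra_simps)

lemma golden_le:
  assumes "golden (c, d)"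
  shows "c \<le> d" "8 * c \<le> 5 * d"
proof -
  have g: "c * c + c * d \<le> d * d" using assms by (simp add: golden_def)
  show "c \<le> d"
  proof (rule ccontr)
    assume "\<not> c \<le> d"
    then have "d * d < c * c" by (simp add: mult_strict_mono)
    with g show False by simp
  qed
  show "8 * c \<le> 5 * d"
  proof (rule ccontr)
    assume "\<not> 8 * c \<le> 5 * d"
    then have lt: "5 * d < 8 * c" by simp
    then have "(5 * d) * (5 * d) \<le> (5 * d) * (8 * c)" by simp
    then have "25 * (d * d) \<le> 40 * (c * d)" by (simp add: algebra_simps)
    with g have "25 * (c * c) \<le> 15 * (c * d)" by linarith
    then have "(5 * c) * c \<le> (3 * d) * c" by (simp add: algebra_simps)
    moreover have "c > 0" using lt by simp
    ultimately have "5 * c \<le> 3 * d" by simp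
    with lt show False by simp
  qed
qed

lemma golden_weighted_ineq:
  assumes "golden (c, c + e)" "X \<le> Y" "Y \<le> 2 * X"
  shows "11 * (c * (X + 2 * Y) + e * Y) \<le> 5 * (c * X + (c + e) * Y) + 7 * (c * Y + (c + e) * (X + Y))"
proof -
  have "3 * c \<le> 5 * e" using golden_le(2)[OF assms(1)] by simp
  then have "3 * (c * Y) + 21 * (c * X) \<le> 5 * (e * Y) + 35 * (e * X)"
    using mult_le_mono1[of "3 * c" "5 * e" "Y + 7 * X"] by (simp add: algebra_simps)
  moreover have "c * Y \<le> 2 * (c * X)" using mult_le_mono2[OF assms(3), of c] by simp
  moreover have "11 * (c * (X + 2 * Y) + e * Y) = 11 * (c * X) + 22 * (c * Y) + 11 * (e * Y)"
    and "5 * (c * X + (c + e) * Y) + 7 * (c * Y + (c + e) * (X + Y))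
           = 12 * (c * X) + 19 * (c * Y) + 12 * (e * Y) + 7 * (e * X)"
    by (simp_all add: algebra_simps)
  ultimately show ?thesis by linarith
qed

lemma stern_first_half_weighted_bound:
  assumes "golden (c, d)" "y \<le> 2 * 4 ^ k"
  shows "11 * (c * stern (4 ^ Suc k - y) + d * stern y)
           \<le> 5 * fst ((stern_step ^^ Suc k) (c, d)) + 7 * snd ((stern_step ^^ Suc k) (c, d))"
proof -
  define X Y where "X = fib (2 * k + 1)" and "Y = fib (2 * k + 2)"
  have Y_eq: "Y = X + fib (2 * k)" and fib_3: "fib (2 * k + 3) = X + Y"
    by (simp_all add: X_def Y_def numeral_eq_Suc)
  have XY: "X \<le> Y" "Y \<le> 2 * X"
    using fib_mono[of "2 * k" "2 * k + 1"] by (simp_all add: Y_eq X_def)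
  obtain e where d: "d = c + e" using golden_le(1)[OF assms(1)] le_Suc_ex by blast
  have "y \<le> 2 ^ (2 * k + 1)" using assms(2) by (simp add: power_mult)
  then have sy: "stern y \<le> Y" using stern_le_fib[of y "2 * k + 1"] by (simp add: Y_def)
  have y_le: "y \<le> 4 ^ Suc k" using assms(2) by simp
  have "stern (4 ^ Suc k - y) + stern y = stern (4 ^ Suc k * 1 + y)"
    using stern_power4_mult_add[OF y_le, of 1, unfolded one_add_one] by simp
  also have "\<dots> \<le> fib (2 * k + 3 + 1)"
    using assms(2) by (intro stern_le_fib) (simp add: power_mult power_add)
  also have "\<dots> = fib (2 * k + 3) + fib (2 * k + 2)" by (simp add: numeral_eq_Suc)
  also have "\<dots> = X + 2 * Y" by (simp add: fib_3 Y_def)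
  finally have sum: "stern (4 ^ Suc k - y) + stern y \<le> X + 2 * Y" .
  have "c * stern (4 ^ Suc k - y) + d * stern y = c * (stern (4 ^ Suc k - y) + stern y) + e * stern y"
    by (simp add: d algebra_simps)
  also have "\<dots> \<le> c * (X + 2 * Y) + e * Y"
    by (rule add_mono[OF mult_le_mono2[OF sum] mult_le_mono2[OF sy]])
  finally have bound: "c * stern (4 ^ Suc k - y) + d * stern y \<le> c * (X + 2 * Y) + e * Y" .
  moreover have "11 * (c * (X + 2 * Y) + e * Y) \<le> 5 * (c * X + d * Y) + 7 * (c * Y + d * (X + Y))"
    using golden_weighted_ineq[OF assms(1)[unfolded d] XY] by (simp add: d)
  moreover have "(stern_step ^^ Suc k) (c, d) = (c * X + d * Y, c * Y + d * (X + Y))"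
    unfolding stern_step_funpow_Suc fib_3 X_def Y_def ..
  ultimately show ?thesis using bound by simp
qed

text \<open>The weights \<open>5, 7, 11\<close> are tuned to the start \<open>(c, d) = (1, 4) = (a(8), a(9))\<close>, for which
  the right-hand side equals \<open>11 F(2m+4)\<close>.\<close>
lemma stern_before_tens_weighted_bound:
  "golden (c, d) \<Longrightarrow> y \<le> tens m \<Longrightarrow>
     11 * (c * stern (4 ^ m - y) + d * stern y)
       \<le> 5 * fst ((stern_step ^^ m) (c, d)) + 7 * snd ((stern_step ^^ m) (c, d))"
proof (induction m arbitrary: c d y)
  case 0
  then show ?case using golden_le(1)[of c d] by simp
next
  case (Suc k)
  show ?case
  proof (cases "y \<le> 2 * 4 ^ k")
    case True
    with Suc.prems(1) show ?thesis by (rule stern_first_half_weighted_bound)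
  next
    case False
    define y' where "y' = y - 2 * 4 ^ k"
    have y: "y = 4 ^ k * 2 + y'" using False by (simp add: y'_def)
    have y'_le: "y' \<le> tens k" using Suc.prems(2) by (simp add: y tens_Suc)
    then have "y' \<le> 4 ^ k" using tens_less[of k] by simp
    then have "stern (4 ^ k * 1 + (4 ^ k - y')) = stern y' + stern (4 ^ k - y')"
      and "stern (4 ^ k * 2 + y') = stern (4 ^ k - y') + 2 * stern y'"
      using stern_power4_mult_add[of "4 ^ k - y'" k 1, unfolded one_add_one]
        stern_power4_mult_add[of y' k 2, unfolded numeral_3_eq_3[symmetric]]
      by simp_all
    moreover have "4 ^ Suc k - y = 4 ^ k * 1 + (4 ^ k - y')" using \<open>y' \<le> 4 ^ k\<close> by (simp add: y)
    ultimately have "c * stern (4 ^ Suc k - y) + d * stern y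
        = (c + d) * stern (4 ^ k - y') + (c + 2 * d) * stern y'"
      by (simp add: y algebra_simps)
    moreover have "(stern_step ^^ Suc k) (c, d) = (stern_step ^^ k) (c + d, c + 2 * d)"
      by (simp only: funpow_Suc_right comp_def stern_step.simps)
    moreover note Suc.IH[OF golden_stern_step[OF Suc.prems(1), simplified] y'_le]
    ultimately show ?thesis by simp
  qed
qed

lemma val2_bin: "val2 (bin n) = n"
proof -
  have "val2 (bin_aux n) = n"
  proof (induction n rule: less_induct)
    case (less n)
    show ?case
    proof (cases "n = 0")
      case False
      then have "val2 (bin_aux n) = val2 (bin_aux (n div 2)) * 2 + (if odd n then 1 else 0)"
        by (simp add: bin_aux.simps[of n] val2_append)
      with less.IH[of "n div 2"] False show ?thesis by simp presburger
    qed (simp add: bin_aux.simps)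
  qed
  then show ?thesis by (simp add: bin_def)
qed

lemma bin_val2_Cons_True: "bin (val2 (True # ys)) = True # ys"
proof -
  have "bin_aux (val2 (True # ys)) = True # ys"
  proof (induction ys rule: rev_induct)
    case Nil
    then show ?case by (simp add: bin_aux.simps)
  next
    case (snoc b ys)
    define m where "m = val2 (True # ys)"
    have val: "val2 (True # ys @ [b]) = 2 * m + (if b then 1 else 0)"
      using val2_append[of "True # ys" "[b]"] by (simp add: m_def)
    have "bin_aux (2 * m + (if b then 1 else 0)) = bin_aux m @ [b]"
      using bin_aux.simps[of "2 * m + (if b then 1 else 0)"] by (auto simp: m_def)
    then show ?case unfolding val snoc.IH[folded m_def] by simp
  qed
  then show ?thesis by (simp add: bin_def)
qed

lemma bin_Cons_True: "0 < n \<Longrightarrow> \<exists>ys. bin n = True # ys"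
proof (induction n rule: less_induct)
  case (less n)
  show ?case
  proof (cases "n div 2 = 0")
    case True
    with less.prems have "n = 1" by simp
    then show ?thesis by (simp add: bin_def bin_aux.simps)
  next
    case False
    with less.IH[of "n div 2"] less.prems obtain ys where "bin_aux (n div 2) = True # ys"
      by (auto simp: bin_def)
    with less.prems show ?thesis by (simp add: bin_def bin_aux.simps[of n])
  qed
qed

lemma power_length_bin_le: "0 < v \<Longrightarrow> 2 ^ (length (bin v) - 1) \<le> v"
  using bin_Cons_True[of v] val2_bin[of v] by auto

lemma less_val2_take_bin: "v < (val2 (take k (bin v)) + 1) * 2 ^ (length (bin v) - k)"
proof -
  have "v = val2 (take k (bin v)) * 2 ^ (length (bin v) - k) + val2 (drop k (bin v))"
    using val2_bin[of v] val2_append[of "take k (bin v)" "drop k (bin v)"] by simp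
  with val2_less[of "drop k (bin v)"] show ?thesis by simp
qed

lemma s_le_fib: "x < 2 ^ k \<Longrightarrow> s x \<le> fib (k + 1)"
  unfolding s_def by (rule stern_le_fib) simp

lemma s_double_tens: "s (2 * tens m) = fib (2 * m + 2)"
  unfolding s_def stern_double_Suc stern_tens using fib_plus_2[of "2 * m"] by simp

lemma notin_R_if_le_earlier: "i < v \<Longrightarrow> s v \<le> s i \<Longrightarrow> v \<notin> R"
  by (auto simp: R_def)

lemma fib_stern_step_1_4:
  "11 * fib (2 * n + 4) = 5 * fst ((stern_step ^^ n) (1, 4)) + 7 * snd ((stern_step ^^ n) (1, 4))"
  "fib (2 * n + 4) < snd ((stern_step ^^ n) (1, 4))"
proof -
  have "11 * fib (2 * n + 4) = 5 * fst ((stern_step ^^ n) (1, 4)) + 7 * snd ((stern_step ^^ n) (1, 4))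
        \<and> fib (2 * n + 4) < snd ((stern_step ^^ n) (1, 4))"
  proof (cases n)
    case (Suc k)
    have "fib (2 * n + 4) = 3 * fib (2 * k + 1) + 5 * fib (2 * k + 2)"
      "fib (2 * k + 3) = fib (2 * k + 1) + fib (2 * k + 2)"
      by (simp_all add: Suc numeral_eq_Suc)
    moreover have "0 < fib (2 * k + 1)" by (simp add: fib_neq_0_nat)
    ultimately show ?thesis unfolding Suc stern_step_funpow_Suc by simp
  qed (simp add: numeral_eq_Suc)
  then show "11 * fib (2 * n + 4) = 5 * fst ((stern_step ^^ n) (1, 4)) + 7 * snd ((stern_step ^^ n) (1, 4))"
    "fib (2 * n + 4) < snd ((stern_step ^^ n) (1, 4))" by simp_all
qed

definition record_1000 :: "nat \<Rightarrow> nat" where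
  "record_1000 n = 8 * 4 ^ n + tens n"

lemma s_less_record_1000_le_fib:
  assumes "x < record_1000 n"
  shows "s x \<le> fib (2 * n + 4)"
proof (cases "x < 8 * 4 ^ n")
  case True
  then have "x < 2 ^ (2 * n + 3)" by (simp add: power_add power_mult)
  then show ?thesis using s_le_fib[of x "2 * n + 3"] by (simp add: algebra_simps)
next
  case False
  define y where "y = x + 1 - 8 * 4 ^ n"
  have y_le: "y \<le> tens n" using assms by (simp add: y_def record_1000_def)
  have "s x = stern (4 ^ n * 8 + y)" using False by (simp add: s_def y_def)
  also have "\<dots> = stern (4 ^ n - y) + 4 * stern y"
    using stern_power4_mult_add[of y n 8] y_le tens_less[of n] by simp
  finally have "11 * s x \<le> 5 * fst ((stern_step ^^ n) (1, 4)) + 7 * snd ((stern_step ^^ n) (1, 4))"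
    using stern_before_tens_weighted_bound[of 1 4 y n] y_le by (simp add: golden_def)
  then show ?thesis unfolding fib_stern_step_1_4(1)[symmetric] by simp
qed

lemma s_record_1000: "s (record_1000 n) = snd ((stern_step ^^ n) (1, 4))"
  using arg_cong[OF stern_power4_mult_add_tens[of n 8], where f = snd]
  by (simp add: s_def record_1000_def mult.commute)

lemma s_after_record_1000_le: "record_1000 n < x \<Longrightarrow> x < 9 * 4 ^ n \<Longrightarrow> s x \<le> s (record_1000 n)"
  using stern_after_tens_le[of n "x - 8 * 4 ^ n" 8] by (simp add: s_def record_1000_def mult.commute)

lemma record_1000_in_R: "record_1000 n \<in> R"
  using s_less_record_1000_le_fib fib_stern_step_1_4(2)[of n] s_record_1000[of n]
  by (fastforce simp: R_def)

lemma R_ge_record_1000: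
  assumes "v \<in> R" "2 ^ (2 * n + 3) \<le> v"
  shows "record_1000 n \<le> v"
proof (rule ccontr)
  assume "\<not> ?thesis"
  have "2 * Suc n + 2 = 2 * n + 4" by simp
  then have "s (2 * tens (Suc n)) = fib (2 * n + 4)" using s_double_tens[of "Suc n"] by (simp only:)
  moreover from \<open>\<not> ?thesis\<close> have "s v \<le> fib (2 * n + 4)"
    by (intro s_less_record_1000_le_fib) simp
  ultimately have "s v \<le> s (2 * tens (Suc n))" by simp
  moreover have "2 * tens (Suc n) < v"
    using tens_less[of "Suc n"] assms(2) by (simp add: power_add power_mult)
  ultimately show False using assms(1) notin_R_if_le_earlier by blast
qed

lemma R_eq_record_1000:
  assumes "v \<in> R" "2 ^ (2 * n + 3) \<le> v" "v < 9 * 4 ^ n"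
  shows "v = record_1000 n"
proof (rule ccontr)
  assume "v \<noteq> record_1000 n"
  with R_ge_record_1000[OF assms(1,2)] have "record_1000 n < v" by simp
  moreover from this have "s v \<le> s (record_1000 n)" using assms(3) by (rule s_after_record_1000_le)
  ultimately have "v \<notin> R" by (rule notin_R_if_le_earlier)
  with assms(1) show False by simp
qed

theorem mainTheorem15:
  fixes n :: nat
  defines "w \<equiv> val2 ([True, False, False, False] @ pow_str [True, False] n)"
  shows "{v \<in> R. length (bin v) = 2 * n + 4 \<and>
                 take 4 (bin v) = [True, False, False, False]} = {w}
         \<and> w \<in> R \<and> length (bin w) = 2 * n + 4
         \<and> (\<forall>v \<in> R. length (bin v) = 2 * n + 4 \<longrightarrow> w \<le> v)"
proof -
  note len = length_pow_str_10[of n]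
  have w: "w = record_1000 n"
    by (simp add: w_def val2_append len tens_def record_1000_def power_mult)
  have bin_w: "bin w = [True, False, False, False] @ pow_str [True, False] n"
    unfolding w_def by (simp only: append_Cons bin_val2_Cons_True)
  have lower: "2 ^ (2 * n + 3) \<le> v" if "length (bin v) = 2 * n + 4" for v
    using that power_length_bin_le[of v] by (cases "v = 0") (simp_all add: bin_def add.commute)
  have upper: "v < 9 * 4 ^ n"
    if "length (bin v) = 2 * n + 4" "take 4 (bin v) = [True, False, False, False]" for v
    using that less_val2_take_bin[of v 4] by (simp add: power_mult)
  have w_R: "w \<in> R" using record_1000_in_R[of n] by (simp add: w)
  have len_w: "length (bin w) = 2 * n + 4" by (simp add: bin_w len)
  have "{v \<in> R. length (bin v) = 2 * n + 4 \<and> take 4 (bin v) = [True, False, False, False]} = {w}"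
  proof (intro equalityI subsetI)
    fix v assume "v \<in> {v \<in> R. length (bin v) = 2 * n + 4 \<and> take 4 (bin v) = [True, False, False, False]}"
    then show "v \<in> {w}" using R_eq_record_1000[of v n] lower[of v] upper[of v] by (simp add: w)
  qed (simp add: w_R bin_w len)
  moreover have "\<forall>v \<in> R. length (bin v) = 2 * n + 4 \<longrightarrow> w \<le> v"
    using R_ge_record_1000 lower by (simp add: w)
  ultimately show ?thesis using w_R len_w by blast
qed

end
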